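(* Let $\mathcal{D}$ be a geographic domain (a measurable subset of $\mathbb{R}^d$, e.g. $d=2$) with finite area $|\mathcal{D}|=\int_{\mathcal{D}}1\,dz>0$, and let $x:\mathcal{D}\to\mathbb{R}^p$ be a feature map. Suppose we observe $n_1$ presence points $z_1,\dots,z_{n_1}\in\mathcal{D}$ (indexed by $y_i=1$) and $n_0$ background points $z_{n_1+1},\dots,z_{n_1+n_0}\in\mathcal{D}$ (indexed by $y_i=0$), with $x_i=x(z_i)$. Let $\{f_\theta:\theta\in\mathbb{R}^d\}$ be a parametric family of real-valued functions and $J(\theta)$ a penalty function. Define $$g_1(\alpha,\theta)=\Big(\sum_{i:y_i=1}\alpha+f_\theta(x_i)\Big)-\int_{\mathcal{D}}e^{\alpha+f_\theta(x(z))}\,dz-J(\theta)-\log n_1!,$$ the penalized log-likelihood of an inhomogeneous Poisson process with intensity $e^{\alpha+f_\theta(x(z))}$, and $$g_2(\theta)=\sum_{i:y_i=1}f_\theta(x_i)-n_1\log\Big(\int_{\mathcal{D}}e^{f_\theta(x(z))}\,dz\Big)-J(\theta),$$ the penalized log-likelihood of an i.i.d. sample with density proportional to $e^{f_\theta(x(z))}$ (assuming the integrals are finite). Then $\theta$ maximizes $g_2$ if and only if $(\alpha,\theta)$ maximizes $g_1$ for some $\alpha\in\mathbb{R}$. The same conclusion holds if the integrals $\int_{\mathcal{D}}e^{\alpha+f_\theta(x(z))}dz$ and $\int_{\mathcal{D}}e^{f_\theta(x(z))}dz$ are replaced by the background-sample sums $\frac{|\mathcal{D}|}{n_0}\sum_{i:y_i=0}e^{\alpha+f_\theta(x_i)}$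 and $\frac{|\mathcal{D}|}{n_0}\sum_{i:y_i=0}e^{f_\theta(x_i)}$ respectively.
   Context: Here $g_1$ is the (penalized) inhomogeneous Poisson process (IPP) log-likelihood and $g_2$ is the (penalized) Maxent log-likelihood; the intercept $\alpha$ is not penalized. *)

theory Defs
  imports "HOL-Analysis.Analysis"
begin

text \<open>Observations: points z 1, ..., z (n1 + n0); the first n1 are presence points
  (y_i = 1), the remaining n0 are background points (y_i = 0).\<close>

definition presence_idx :: "nat \<Rightarrow> nat set" where
  "presence_idx n1 = {1..n1}"

definition background_idx :: "nat \<Rightarrow> nat \<Rightarrow> nat set" where
  "background_idx n1 n0 = {n1+1..n1+n0}"

definition g1 :: "'a::euclidean_space set \<Rightarrow> ('a \<Rightarrow> 'b) \<Rightarrow> ('c \<Rightarrow> 'b \<Rightarrow> real) \<Rightarrow> ('c \<Rightarrow> real)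
    \<Rightarrow> (nat \<Rightarrow> 'a) \<Rightarrow> nat \<Rightarrow> real \<Rightarrow> 'c \<Rightarrow> real" where
  "g1 D xf f J z n1 \<alpha> \<theta> =
     (\<Sum>i\<in>presence_idx n1. \<alpha> + f \<theta> (xf (z i)))
     - (LINT u:D|lebesgue. exp (\<alpha> + f \<theta> (xf u)))
     - J \<theta> - ln (fact n1)"

definition g2 :: "'a::euclidean_space set \<Rightarrow> ('a \<Rightarrow> 'b) \<Rightarrow> ('c \<Rightarrow> 'b \<Rightarrow> real) \<Rightarrow> ('c \<Rightarrow> real)
    \<Rightarrow> (nat \<Rightarrow> 'a) \<Rightarrow> nat \<Rightarrow> 'c \<Rightarrow> real" where
  "g2 D xf f J z n1 \<theta> =
     (\<Sum>i\<in>presence_idx n1. f \<theta> (xf (z i)))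
     - real n1 * ln (LINT u:D|lebesgue. exp (f \<theta> (xf u)))
     - J \<theta>"

definition g1_bg :: "'a::euclidean_space set \<Rightarrow> ('a \<Rightarrow> 'b) \<Rightarrow> ('c \<Rightarrow> 'b \<Rightarrow> real) \<Rightarrow> ('c \<Rightarrow> real)
    \<Rightarrow> (nat \<Rightarrow> 'a) \<Rightarrow> nat \<Rightarrow> nat \<Rightarrow> real \<Rightarrow> 'c \<Rightarrow> real" where
  "g1_bg D xf f J z n1 n0 \<alpha> \<theta> =
     (\<Sum>i\<in>presence_idx n1. \<alpha> + f \<theta> (xf (z i)))
     - measure lebesgue D / real n0 * (\<Sum>i\<in>background_idx n1 n0. exp (\<alpha> + f \<theta> (xf (z i))))
     - J \<theta> - ln (fact n1)"

definition g2_bg :: "'a::euclidean_space set \<Rightarrow> ('a \<Rightarrow> 'b) \<Rightarrow> ('c \<Rightarrow> 'b \<Rightarrow> real) \<Rightarrow> ('c \<Rightarrow> real)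
    \<Rightarrow> (nat \<Rightarrow> 'a) \<Rightarrow> nat \<Rightarrow> nat \<Rightarrow> 'c \<Rightarrow> real" where
  "g2_bg D xf f J z n1 n0 \<theta> =
     (\<Sum>i\<in>presence_idx n1. f \<theta> (xf (z i)))
     - real n1 * ln (measure lebesgue D / real n0 * (\<Sum>i\<in>background_idx n1 n0. exp (f \<theta> (xf (z i)))))
     - J \<theta>"

end

theory Submission
  imports Defs
begin

text \<open>For fixed \<theta>, \<open>g\<^sub>1\<close> is a concave function of the intercept \<alpha> of the form
  \<open>n\<alpha> - e\<^sup>\<alpha> I(\<theta>) + const(\<theta>)\<close>, with \<open>n = n\<^sub>1\<close> and \<open>I(\<theta>) > 0\<close> the (integral or background-sample)
  normalising constant. Its maximum over \<alpha> is attained at \<open>\<alpha> = ln (n / I(\<theta>))\<close>, and the resulting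
  profile likelihood is \<open>g\<^sub>2(\<theta>)\<close> plus a constant independent of \<theta>. Maximising \<open>g\<^sub>1\<close> jointly is therefore
  the same as maximising its profile, i.e. \<open>g\<^sub>2\<close>. Only \<open>I(\<theta>) > 0\<close> is needed.\<close>

lemma maximizer_iff_profile_maximizer:
  fixes G :: "'a \<Rightarrow> 'b \<Rightarrow> 'c::order"
  assumes le_profile: "\<And>a t. G a t \<le> P t"
    and attains_profile: "\<And>t. G (m t) t = P t"
  shows "(\<forall>t'. P t' \<le> P t) \<longleftrightarrow> (\<exists>a. \<forall>a' t'. G a' t' \<le> G a t)"
proof
  assume max: "\<forall>t'. P t' \<le> P t"
  have "G a' t' \<le> G (m t) t" for a' t'
    using le_profile[of a' t'] max attains_profile[of t] by (metis order_trans)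
  then show "\<exists>a. \<forall>a' t'. G a' t' \<le> G a t" by blast
next
  assume "\<exists>a. \<forall>a' t'. G a' t' \<le> G a t"
  then obtain a where max: "\<And>a' t'. G a' t' \<le> G a t" by blast
  have "P t' \<le> P t" for t'
    using max[of "m t'" t'] attains_profile[of t'] le_profile[of a t] by (metis order_trans)
  then show "\<forall>t'. P t' \<le> P t" by blast
qed

lemma linear_minus_exp_le:
  fixes n I a :: real
  assumes "n > 0" and "I > 0"
  shows "n * a - exp a * I \<le> n * ln (n / I) - n"
proof -
  define x where "x = exp a * I / n"
  have "x > 0" using assms by (simp add: x_def)
  have "n * ln x \<le> n * (x - 1)"
    using ln_le_minus_one[OF \<open>x > 0\<close>] assms(1) by simp
  moreover have "ln x = a - ln (n / I)"
    using assms by (simp add: x_def ln_div ln_mult)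
  moreover have "n * x = exp a * I"
    using assms(1) by (simp add: x_def)
  ultimately show ?thesis by (simp add: algebra_simps)
qed

lemma maximizer_iff_intercept_maximizer:
  fixes S I J :: "'c \<Rightarrow> real" and n c :: real
  assumes "n > 0" and I_pos: "\<And>t. I t > 0"
  shows "(\<forall>t'. S t' - n * ln (I t') - J t' \<le> S t - n * ln (I t) - J t) \<longleftrightarrow>
         (\<exists>a. \<forall>a' t'. n * a' + S t' - exp a' * I t' - J t' - c \<le> n * a + S t - exp a * I t - J t - c)"
proof -
  define P where "P t = S t - n * ln (I t) - J t + (n * ln n - n - c)" for t
  have "n * a + S t - exp a * I t - J t - c \<le> P t" for a t
    using linear_minus_exp_le[OF \<open>n > 0\<close> I_pos[of t], of a] \<open>n > 0\<close> I_pos[of t]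
    by (simp add: P_def ln_div algebra_simps)
  moreover have "n * ln (n / I t) + S t - exp (ln (n / I t)) * I t - J t - c = P t" for t
  proof -
    have "exp (ln (n / I t)) * I t = n" using \<open>n > 0\<close> I_pos[of t] by simp
    then show ?thesis using \<open>n > 0\<close> I_pos[of t] by (simp add: P_def ln_div algebra_simps)
  qed
  ultimately have "(\<forall>t'. P t' \<le> P t) \<longleftrightarrow>
      (\<exists>a. \<forall>a' t'. n * a' + S t' - exp a' * I t' - J t' - c \<le> n * a + S t - exp a * I t - J t - c)"
    by (rule maximizer_iff_profile_maximizer)
  then show ?thesis by (simp add: P_def)
qed

lemma set_integral_pos:
  fixes f :: "'a \<Rightarrow> real"
  assumes D: "D \<in> sets M" and "measure M D > 0"
    and f_pos: "\<And>u. u \<in> D \<Longrightarrow> f u > 0"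
    and int: "set_integrable M D f"
  shows "(LINT u:D|M. f u) > 0"
proof -
  have int': "integrable M (\<lambda>u. indicator D u * f u)"
    using int by (simp add: set_integrable_def)
  have "(LINT u:D|M. f u) \<ge> 0"
    unfolding set_lebesgue_integral_def
    by (rule integral_nonneg_AE) (simp add: indicator_def f_pos less_imp_le)
  moreover have "(LINT u:D|M. f u) \<noteq> 0"
  proof
    assume "(LINT u:D|M. f u) = 0"
    then have "AE u in M. indicator D u * f u = 0"
      using integral_nonneg_eq_0_iff_AE[OF int'] f_pos
      unfolding set_lebesgue_integral_def
      by (simp add: indicator_def less_imp_le)
    then have "AE u in M. u \<notin> D"
      by eventually_elim (auto simp: indicator_def dest: f_pos)
    then have "emeasure M D = 0"
      using AE_iff_measurable[OF D, of "\<lambda>u. u \<notin> D"] sets.sets_into_space[OF D]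
      by (simp add: Collect_conj_eq Int_absorb1)
    with \<open>measure M D > 0\<close> show False by (simp add: measure_def)
  qed
  ultimately show ?thesis by simp
qed

lemma sum_presence_idx_add_const:
  "(\<Sum>i\<in>presence_idx n1. \<alpha> + g i) = real n1 * \<alpha> + (\<Sum>i\<in>presence_idx n1. g i)"
  by (simp add: sum.distrib presence_idx_def)

lemma g1_eq:
  "g1 D xf f J z n1 \<alpha> \<theta> = real n1 * \<alpha> + (\<Sum>i\<in>presence_idx n1. f \<theta> (xf (z i)))
     - exp \<alpha> * (LINT u:D|lebesgue. exp (f \<theta> (xf u))) - J \<theta> - ln (fact n1)"
  by (simp add: g1_def sum_presence_idx_add_const exp_add set_integral_mult_right)

lemma g1_bg_eq:
  "g1_bg D xf f J z n1 n0 \<alpha> \<theta> = real n1 * \<alpha> + (\<Sum>i\<in>presence_idx n1. f \<theta> (xf (z i)))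
     - exp \<alpha> * (measure lebesgue D / real n0 * (\<Sum>i\<in>background_idx n1 n0. exp (f \<theta> (xf (z i)))))
     - J \<theta> - ln (fact n1)"
  by (simp add: g1_bg_def sum_presence_idx_add_const exp_add sum_distrib_left algebra_simps)

theorem proposition1:
  fixes D :: "'a::euclidean_space set"
    and xf :: "'a \<Rightarrow> 'b::euclidean_space"
    and f :: "'c::euclidean_space \<Rightarrow> 'b \<Rightarrow> real"
    and J :: "'c \<Rightarrow> real"
    and z :: "nat \<Rightarrow> 'a"
    and n1 n0 :: nat
  assumes D_meas: "D \<in> sets lebesgue"
    and D_fin: "emeasure lebesgue D < \<infinity>"
    and D_pos: "measure lebesgue D > 0"
    and n1_pos: "n1 \<ge> 1"
    and n0_pos: "n0 \<ge> 1"
    and z_in_D: "\<And>i. i \<in> {1..n1+n0} \<Longrightarrow> z i \<in> D"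
    and int_fin: "\<And>\<theta>. set_integrable lebesgue D (\<lambda>u. exp (f \<theta> (xf u)))"
  shows "(\<forall>\<theta>. (\<forall>\<theta>'. g2 D xf f J z n1 \<theta>' \<le> g2 D xf f J z n1 \<theta>) \<longleftrightarrow>
              (\<exists>\<alpha>. \<forall>\<alpha>' \<theta>'. g1 D xf f J z n1 \<alpha>' \<theta>' \<le> g1 D xf f J z n1 \<alpha> \<theta>))
       \<and> (\<forall>\<theta>. (\<forall>\<theta>'. g2_bg D xf f J z n1 n0 \<theta>' \<le> g2_bg D xf f J z n1 n0 \<theta>) \<longleftrightarrow>
              (\<exists>\<alpha>. \<forall>\<alpha>' \<theta>'. g1_bg D xf f J z n1 n0 \<alpha>' \<theta>' \<le> g1_bg D xf f J z n1 n0 \<alpha> \<theta>))"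
proof -
  define S where "S \<theta> = (\<Sum>i\<in>presence_idx n1. f \<theta> (xf (z i)))" for \<theta>
  define I where "I \<theta> = (LINT u:D|lebesgue. exp (f \<theta> (xf u)))" for \<theta>
  define B where "B \<theta> = measure lebesgue D / real n0 * (\<Sum>i\<in>background_idx n1 n0. exp (f \<theta> (xf (z i))))"
    for \<theta>
  have "real n1 > 0" using n1_pos by simp
  moreover have "I \<theta> > 0" for \<theta>
    unfolding I_def using set_integral_pos[OF D_meas D_pos _ int_fin] by simp
  moreover have "B \<theta> > 0" for \<theta>
    unfolding B_def using D_pos n0_pos by (intro mult_pos_pos sum_pos) (auto simp: background_idx_def)
  ultimately show ?thesis
    using maximizer_iff_intercept_maximizer[where n = "real n1" and I = I and S = S and J = J and c = "ln (fact n1)"]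
      maximizer_iff_intercept_maximizer[where n = "real n1" and I = B and S = S and J = J and c = "ln (fact n1)"]
    by (simp add: g1_eq g1_bg_eq g2_def g2_bg_def S_def I_def B_def)
qed

end
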